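(* Let $q$ be a prime power and $g\ge1$ a fixed integer. Information packets are partitioned into $n$ disjoint generations each of size $g$. At each transmission (over a perfect channel) the source independently chooses one generation uniformly at random (probability $1/n$ each) and sends a linear combination of its packets with coefficient vector drawn uniformly from $GF(q)^{g}$; decoding fails after $t$ received coded packets if some generation has not yet received $g$ linearly independent coefficient vectors. Then, as $n\to\infty$, the probability of decoding failure when $t$ coded packets have been collected is greater than \[ 1-\exp\Bigl[-\frac{1}{(g-1)!}\,n(\log n)^{g-1}\exp\Bigl(-\frac{t}{n}\Bigr)\Bigr]+\mathcal{O}\Bigl(\frac{\log\log n}{\log n}\Bigr). \] *)

theory Defs
  imports "HOL-Probability.Probability_Mass_Function" "HOL-Library.Landau_Symbols"
begin

text \<open>Coefficient vectors in GF(q)^g are represented as extensional functions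
  on the index set {..<g}, with values in a finite field type 'a (|'a| = q).\<close>

definition coeff_space :: "nat \<Rightarrow> (nat \<Rightarrow> 'a::{field,finite}) set" where
  "coeff_space g = PiE {..<g} (\<lambda>_. UNIV)"

definition packet_pmf :: "nat \<Rightarrow> nat \<Rightarrow> (nat \<times> (nat \<Rightarrow> 'a::{field,finite})) pmf" where
  "packet_pmf n g = pair_pmf (pmf_of_set {..<n}) (pmf_of_set (coeff_space g))"

definition packets_pmf :: "nat \<Rightarrow> nat \<Rightarrow> nat \<Rightarrow> (nat \<times> (nat \<Rightarrow> 'a::{field,finite})) list pmf" where
  "packets_pmf n g t = replicate_pmf t (packet_pmf n g)"

definition lin_indep_vecs :: "nat \<Rightarrow> (nat \<Rightarrow> 'a::field) list \<Rightarrow> bool" where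
  "lin_indep_vecs g vs \<longleftrightarrow>
     (\<forall>c :: nat \<Rightarrow> 'a. (\<forall>k<g. (\<Sum>j<length vs. c j * (vs ! j) k) = 0) \<longrightarrow> (\<forall>j<length vs. c j = 0))"

definition gen_decodable :: "nat \<Rightarrow> nat \<Rightarrow> (nat \<times> (nat \<Rightarrow> 'a::field)) list \<Rightarrow> bool" where
  "gen_decodable g i xs \<longleftrightarrow>
     (\<exists>js. length js = g \<and> distinct js \<and> (\<forall>j\<in>set js. j < length xs \<and> fst (xs ! j) = i)
          \<and> lin_indep_vecs g (map (\<lambda>j. snd (xs ! j)) js))"

definition decoding_fails :: "nat \<Rightarrow> nat \<Rightarrow> (nat \<times> (nat \<Rightarrow> 'a::field)) list \<Rightarrow> bool" where
  "decoding_fails n g xs \<longleftrightarrow> (\<exists>i<n. \<not> gen_decodable g i xs)"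

end

theory Submission
  imports Defs "HOL-Real_Asymp.Real_Asymp"
begin

text \<open>
  The event that every one of the \<open>n\<close> generations receives at least \<open>g\<close> of
  the \<open>t\<close> packets is negatively dependent: its probability is at most \<open>Q\<^sup>n\<close>, where
  \<open>Q = P(Bin(t, 1/n) \<ge> g)\<close>, by induction on \<open>t\<close> using a first-order expansion of the product.
  Hence the failure probability is at least \<open>1 - exp(-n s)\<close> for \<open>s = P(Bin(t, 1/n) = k)\<close>, any
  \<open>k < g\<close>. For \<open>k = g - 1\<close> and \<open>t/n\<close> between \<open>(ln n)/2\<close> and \<open>ln n + O(ln ln n)\<close>, the quantity
  \<open>n s\<close> equals the exponent \<open>x = n (ln n)\<^bsup>g-1\<^esup> e\<^bsup>-t/n\<^esup> / (g-1)!\<close> of the theorem up to a factor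
  \<open>1 - O(ln ln n / ln n)\<close>, and \<open>exp(-(1 - e) x) \<le> exp(-x) + e\<close> uniformly in \<open>x\<close>. For fewer
  packets \<open>k = 0\<close> already gives failure with probability \<open>1 - 1/ln n\<close>, for more packets \<open>x\<close>
  is negligible, and where \<open>x\<close> is large the cruder bound \<open>n s \<ge> ln ln n\<close> suffices.
\<close>

lemma measure_bind_pmf:
  "measure_pmf.prob (bind_pmf M f) A = (\<integral>x. measure_pmf.prob (f x) A \<partial>M)"
  unfolding measure_pmf_bind
  by (subst measure_pmf.measure_bind[where N="count_space UNIV"])
     (auto simp: space_subprob_algebra subprob_space_measure_pmf)

lemma measure_bind_pmf_of_set:
  assumes "finite S" "S \<noteq> {}"
  shows "measure_pmf.prob (bind_pmf (pmf_of_set S) f) A = (\<Sum>x\<in>S. measure_pmf.prob (f x) A) / card S"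
  using assms by (simp add: measure_bind_pmf integral_pmf_of_set)

lemma map_replicate_pmf: "map_pmf (map f) (replicate_pmf t p) = replicate_pmf t (map_pmf f p)"
proof (induction t)
  case (Suc t)
  have "map_pmf ((#) (f x)) (replicate_pmf t (map_pmf f p)) = map_pmf (\<lambda>xs. f x # map f xs) (replicate_pmf t p)" for x
    by (simp add: Suc.IH[symmetric] map_pmf_comp)
  then show ?case
    by (simp add: map_bind_pmf bind_map_pmf map_pmf_def[symmetric] bind_return_pmf map_pmf_comp)
qed simp

definition binomial_tail :: "real \<Rightarrow> nat \<Rightarrow> nat \<Rightarrow> real" where
  "binomial_tail p t a = measure_pmf.prob (binomial_pmf t p) {a..}"

lemma binomial_tail_Suc:
  assumes "p \<in> {0..1}"
  shows "binomial_tail p (Suc t) a = p * binomial_tail p t (a - 1) + (1 - p) * binomial_tail p t a"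
proof -
  have "binomial_pmf (Suc t) p =
      bind_pmf (bernoulli_pmf p) (\<lambda>b. map_pmf (\<lambda>k. (if b then 1 else 0) + k) (binomial_pmf t p))"
    using binomial_pmf_Suc[OF assms] by (simp add: map_pmf_def)
  then have "binomial_tail p (Suc t) a =
      measure_pmf.prob (binomial_pmf t p) ((+) 1 -` {a..}) * p
      + measure_pmf.prob (binomial_pmf t p) ((+) 0 -` {a..}) * (1 - p)"
    using assms unfolding binomial_tail_def by (simp only: measure_bind_pmf measure_map_pmf) simp
  moreover have "(+) 1 -` {a..} = {a - 1..}" "(+) 0 -` {a..} = {a..}" by auto
  ultimately show ?thesis
    unfolding binomial_tail_def by (simp add: mult.commute)
qed

lemma binomial_tail_0: "p \<in> {0..1} \<Longrightarrow> binomial_tail p 0 a = (if a = 0 then 1 else 0)"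
  by (simp add: binomial_tail_def binomial_pmf_0)

lemma binomial_tail_antimono: "a \<le> b \<Longrightarrow> binomial_tail p t b \<le> binomial_tail p t a"
  unfolding binomial_tail_def by (intro measure_pmf.finite_measure_mono) auto

lemma pmf_binomial_le_one_minus_binomial_tail:
  assumes "k < a"
  shows "pmf (binomial_pmf t p) k \<le> 1 - binomial_tail p t a"
proof -
  have "pmf (binomial_pmf t p) k \<le> measure_pmf.prob (binomial_pmf t p) (- {a..})"
    using assms unfolding measure_pmf_single[symmetric] by (intro measure_pmf.finite_measure_mono) auto
  then show ?thesis
    unfolding binomial_tail_def by (simp add: measure_pmf.prob_compl[symmetric] Compl_eq_Diff_UNIV)
qed

lemma prod_plus_sum_le_prod_add:
  fixes q b :: "'a \<Rightarrow> real"
  assumes "finite I" "\<And>i. i \<in> I \<Longrightarrow> 0 \<le> q i" "\<And>i. i \<in> I \<Longrightarrow> 0 \<le> b i"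
  shows "(\<Prod>i\<in>I. q i) + (\<Sum>i\<in>I. b i * (\<Prod>j\<in>I-{i}. q j)) \<le> (\<Prod>i\<in>I. q i + b i)"
  using assms
proof (induction I rule: finite_induct)
  case (insert a I)
  have sum_insert: "(\<Sum>i\<in>I. b i * (\<Prod>j\<in>insert a I - {i}. q j)) = q a * (\<Sum>i\<in>I. b i * (\<Prod>j\<in>I - {i}. q j))"
    unfolding sum_distrib_left
  proof (rule sum.cong)
    fix i assume "i \<in> I"
    then have "insert a I - {i} = insert a (I - {i})" "a \<notin> I - {i}" using insert by auto
    then show "b i * (\<Prod>j\<in>insert a I - {i}. q j) = q a * (b i * (\<Prod>j\<in>I - {i}. q j))"
      using insert by simp
  qed simp
  have "(\<Prod>i\<in>insert a I. q i) + (\<Sum>i\<in>insert a I. b i * (\<Prod>j\<in>insert a I - {i}. q j))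
      = q a * ((\<Prod>i\<in>I. q i) + (\<Sum>i\<in>I. b i * (\<Prod>j\<in>I - {i}. q j))) + b a * (\<Prod>i\<in>I. q i)"
    using insert sum_insert by (simp add: algebra_simps insert_Diff_if)
  also have "\<dots> \<le> q a * (\<Prod>i\<in>I. q i + b i) + b a * (\<Prod>i\<in>I. q i + b i)"
    using insert by (intro add_mono mult_left_mono prod_mono) (auto intro: prod_nonneg)
  also have "\<dots> = (\<Prod>i\<in>insert a I. q i + b i)"
    using insert by (simp add: algebra_simps)
  finally show ?case .
qed simp

definition counts_ge_prob :: "nat \<Rightarrow> nat \<Rightarrow> (nat \<Rightarrow> nat) \<Rightarrow> real" where
  "counts_ge_prob n t r =
     measure_pmf.prob (replicate_pmf t (pmf_of_set {..<n})) {ws. \<forall>i<n. r i \<le> count (mset ws) i}"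

lemma counts_ge_prob_Suc:
  assumes "n \<ge> 1"
  shows "counts_ge_prob n (Suc t) r = (\<Sum>i<n. counts_ge_prob n t (r(i := r i - 1))) / n"
proof -
  have "(#) i -` {ws. \<forall>j<n. r j \<le> count (mset ws) j} = {ws. \<forall>j<n. (r(i := r i - 1)) j \<le> count (mset ws) j}"
    if "i < n" for i
    using that by auto
  moreover have "replicate_pmf (Suc t) p = bind_pmf p (\<lambda>x. map_pmf ((#) x) (replicate_pmf t p))" for p :: "nat pmf"
    by (simp add: map_pmf_def)
  ultimately show ?thesis
    using assms unfolding counts_ge_prob_def
    by (simp add: measure_bind_pmf_of_set lessThan_empty_iff)
qed

lemma counts_ge_prob_le_prod_binomial_tail:
  assumes "n \<ge> 1"
  shows "counts_ge_prob n t r \<le> (\<Prod>i<n. binomial_tail (1 / n) t (r i))"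
proof (induction t arbitrary: r)
  case 0
  show ?case
  proof (cases "\<forall>i<n. r i = 0")
    case False
    then have "counts_ge_prob n 0 r = 0"
      by (auto simp: counts_ge_prob_def)
    then show ?thesis
      using assms by (simp add: binomial_tail_0 prod_nonneg)
  qed (simp add: counts_ge_prob_def binomial_tail_0)
next
  case (Suc t)
  have p: "1 / real n \<in> {0..1}" using assms by simp
  let ?T = "binomial_tail (1 / n) t"
  define q where "q j = ?T (r j)" for j
  define b where "b j = (?T (r j - 1) - q j) / n" for j
  have b_nonneg: "0 \<le> b j" for j
    unfolding b_def q_def by (simp add: binomial_tail_antimono)
  have q_nonneg: "0 \<le> q j" for j
    unfolding q_def binomial_tail_def by simp
  have remove: "(\<Prod>j<n. f j) = f i * (\<Prod>j\<in>{..<n} - {i}. f j)" if "i < n" for i and f :: "nat \<Rightarrow> real"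
    using that by (subst prod.remove[of _ i]) auto
  have "counts_ge_prob n (Suc t) r = (\<Sum>i<n. counts_ge_prob n t (r(i := r i - 1))) / n"
    by (rule counts_ge_prob_Suc[OF assms])
  also have "\<dots> \<le> (\<Sum>i<n. ?T (r i - 1) * (\<Prod>j\<in>{..<n} - {i}. q j)) / n"
  proof (intro divide_right_mono sum_mono)
    fix i assume "i \<in> {..<n}"
    then have "(\<Prod>j<n. ?T ((r(i := r i - 1)) j)) = ?T (r i - 1) * (\<Prod>j\<in>{..<n} - {i}. q j)"
      by (simp add: remove q_def)
    then show "counts_ge_prob n t (r(i := r i - 1)) \<le> ?T (r i - 1) * (\<Prod>j\<in>{..<n} - {i}. q j)"
      using Suc.IH[of "r(i := r i - 1)"] by (simp add: fun_upd_def)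
  qed simp
  also have "\<dots> = (\<Prod>j<n. q j) + (\<Sum>i<n. b i * (\<Prod>j\<in>{..<n} - {i}. q j))"
  proof -
    have "(\<Sum>i<n. ?T (r i - 1) * (\<Prod>j\<in>{..<n} - {i}. q j))
        = (\<Sum>i<n. (\<Prod>j<n. q j) + n * (b i * (\<Prod>j\<in>{..<n} - {i}. q j)))"
      using assms by (intro sum.cong) (auto simp: b_def remove[of _ q] field_simps)
    then show ?thesis
      using assms by (simp add: sum.distrib sum_distrib_left[symmetric] field_simps)
  qed
  also have "\<dots> \<le> (\<Prod>j<n. q j + b j)"
    using q_nonneg b_nonneg by (intro prod_plus_sum_le_prod_add) auto
  also have "\<dots> = (\<Prod>i<n. binomial_tail (1 / n) (Suc t) (r i))"
    using assms by (intro prod.cong) (auto simp: binomial_tail_Suc[OF p] q_def b_def field_simps)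
  finally show ?case .
qed

lemma gen_decodable_imp_count_ge:
  assumes "gen_decodable g i xs"
  shows "g \<le> count (mset (map fst xs)) i"
proof -
  obtain js where js: "length js = g" "distinct js" "\<forall>j\<in>set js. j < length xs \<and> fst (xs ! j) = i"
    using assms unfolding gen_decodable_def by blast
  have "g = card (set js)"
    using js by (simp add: distinct_card)
  also have "\<dots> \<le> card {j. j < length xs \<and> fst (xs ! j) = i}"
    using js by (intro card_mono) auto
  also have "\<dots> = length (filter (\<lambda>x. fst x = i) xs)"
    by (simp add: length_filter_conv_card)
  also have "\<dots> = count (mset (map fst xs)) i"
    by (induction xs) auto
  finally show ?thesis .
qed

lemma prob_decoding_fails_ge:
  assumes "n \<ge> 1"
  shows "1 - binomial_tail (1 / n) t g ^ n \<le>
    measure_pmf.prob (packets_pmf n g t :: (nat \<times> (nat \<Rightarrow> 'a::{field,finite})) list pmf)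
      {xs. decoding_fails n g xs}"
proof -
  let ?M = "packets_pmf n g t :: (nat \<times> (nat \<Rightarrow> 'a)) list pmf"
  let ?A = "{xs. \<forall>i<n. g \<le> count (mset (map fst xs)) i}"
  have generations: "map_pmf (map fst) ?M = replicate_pmf t (pmf_of_set {..<n})"
    unfolding packets_pmf_def packet_pmf_def by (simp add: map_replicate_pmf map_fst_pair_pmf)
  have "measure_pmf.prob ?M ?A =
      measure_pmf.prob (map_pmf (map fst) ?M) {ws. \<forall>i<n. g \<le> count (mset ws) i}"
    by (simp only: measure_map_pmf vimage_Collect_eq)
  also have "\<dots> = counts_ge_prob n t (\<lambda>_. g)"
    unfolding counts_ge_prob_def generations ..
  also have "\<dots> \<le> binomial_tail (1 / n) t g ^ n"
    using counts_ge_prob_le_prod_binomial_tail[OF assms, of t "\<lambda>_. g"] by simp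
  finally have "1 - binomial_tail (1 / n) t g ^ n \<le> measure_pmf.prob ?M (- ?A)"
    using measure_pmf.prob_compl[of ?A ?M] by (simp add: Compl_eq_Diff_UNIV)
  also have "\<dots> \<le> measure_pmf.prob ?M {xs. decoding_fails n g xs}"
  proof (rule measure_pmf.finite_measure_mono)
    show "- ?A \<subseteq> {xs. decoding_fails n g xs}"
      unfolding decoding_fails_def using gen_decodable_imp_count_ge by (force simp: not_le)
  qed simp
  finally show ?thesis .
qed

lemma prob_decoding_fails_ge_exp:
  assumes "n \<ge> 1" "k < g"
  shows "1 - exp (- (real n * pmf (binomial_pmf t (1 / n)) k)) \<le>
    measure_pmf.prob (packets_pmf n g t :: (nat \<times> (nat \<Rightarrow> 'a::{field,finite})) list pmf)
      {xs. decoding_fails n g xs}"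
proof -
  let ?s = "pmf (binomial_pmf t (1 / n)) k"
  have s: "?s \<le> 1 - binomial_tail (1 / n) t g"
    by (rule pmf_binomial_le_one_minus_binomial_tail[OF assms(2)])
  have "binomial_tail (1 / n) t g ^ n \<le> (1 - ?s) ^ n"
    using s by (intro power_mono) (auto simp: binomial_tail_def)
  also have "\<dots> \<le> exp (- ?s) ^ n"
    using s by (intro power_mono) (auto simp: binomial_tail_def pmf_le_1 exp_ge_add_one_self[of "- ?s", simplified])
  also have "\<dots> = exp (- (real n * ?s))"
    by (simp add: exp_of_nat_mult[symmetric])
  finally show ?thesis
    using prob_decoding_fails_ge[OF assms(1), where 'a='a, of t g] by linarith
qed

lemma one_minus_inverse_power_ge_exp:
  fixes x :: real
  assumes "1 < x"
  shows "exp (- (real t / (x - 1))) \<le> (1 - 1 / x) ^ t"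
proof -
  have pos: "0 < x - 1" using assms by simp
  have "(1 + 1 / (x - 1)) ^ t \<le> exp (1 / (x - 1)) ^ t"
    using pos by (intro power_mono) (auto simp: exp_ge_add_one_self[of "1 / (x - 1)", simplified add.commute])
  also have "\<dots> = exp (real t / (x - 1))"
    by (simp add: exp_of_nat_mult[symmetric])
  finally have "1 / exp (real t / (x - 1)) \<le> 1 / (1 + 1 / (x - 1)) ^ t"
    using pos by (intro divide_left_mono) (auto intro!: mult_pos_pos add_pos_pos zero_less_power)
  moreover have "1 - 1 / x = 1 / (1 + 1 / (x - 1))"
    using pos by (simp add: field_simps)
  ultimately show ?thesis
    by (simp only: exp_minus inverse_eq_divide power_one_over)
qed

lemma power_diff_le_binomial_mult_fact:
  assumes "k \<le> t"
  shows "(real t - real k) ^ k \<le> real (t choose k) * fact k"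
proof -
  have "real (t choose k) * fact k = pochhammer (real t - real k + 1) k"
    by (simp add: binomial_gbinomial gbinomial_pochhammer')
  also have "\<dots> = (\<Prod>i\<in>{0..<k}. real t - real k + 1 + real i)"
    by (simp add: pochhammer_prod)
  also have "\<dots> \<ge> (\<Prod>i\<in>{0..<k}. real t - real k)"
    using assms by (intro prod_mono) auto
  finally show ?thesis by simp
qed

lemma mult_exp_neg_half_le_one:
  fixes x :: real
  assumes "0 \<le> x"
  shows "x * exp (- x / 2) \<le> 1"
proof -
  have "x \<le> (1 + x / 4)\<^sup>2"
    using zero_le_power2[of "x / 4 - 1"] unfolding power2_eq_square by (simp add: algebra_simps)
  also have "\<dots> \<le> exp (x / 4) ^ 2"
    using assms by (intro power_mono) (auto simp: exp_ge_add_one_self[of "x / 4", simplified add.commute])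
  also have "\<dots> = exp (x / 2)"
    by (simp add: power2_eq_square mult_exp_exp)
  finally show ?thesis
    by (simp add: exp_minus field_simps)
qed

lemma exp_neg_le_exp_neg_add:
  fixes x y e :: real
  assumes "0 \<le> x" "0 \<le> e" "e \<le> 1 / 2" "x * (1 - e) \<le> y"
  shows "exp (- y) \<le> exp (- x) + e"
proof -
  have exp_diff: "exp u - 1 \<le> u * exp u" if "0 \<le> u" for u :: real
  proof -
    have "(1 - u) * exp u \<le> exp (- u) * exp u"
      using exp_ge_add_one_self[of "- u"] by (intro mult_right_mono) auto
    then show ?thesis by (simp add: exp_minus field_simps)
  qed
  have "x * exp (- (x * (1 - e))) \<le> x * exp (- x / 2)"
    using assms mult_left_mono[of "1 / 2" "1 - e" x] by (intro mult_left_mono) auto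
  also have "\<dots> \<le> 1"
    using assms(1) by (rule mult_exp_neg_half_le_one)
  finally have bound: "x * exp (- (x * (1 - e))) \<le> 1" .
  have "exp (- y) \<le> exp (- x) * exp (e * x)"
    using assms(4) by (simp add: mult_exp_exp algebra_simps)
  also have "\<dots> \<le> exp (- x) * (1 + e * x * exp (e * x))"
    using exp_diff[of "e * x"] assms by (intro mult_left_mono) auto
  also have "\<dots> = exp (- x) + e * (x * exp (- (x * (1 - e))))"
    by (simp add: algebra_simps mult_exp_exp)
  also have "\<dots> \<le> exp (- x) + e"
    using mult_left_mono[OF bound assms(2)] by simp
  finally show ?thesis .
qed

text \<open>By the Poisson approximation, \<open>n P(Bin(t, 1/n) = g - 1)\<close> is close to this quantity.\<close>
definition failure_exponent :: "nat \<Rightarrow> nat \<Rightarrow> nat \<Rightarrow> real" where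
  "failure_exponent g n t =
     (1 / fact (g - 1)) * real n * ln (real n) ^ (g - 1) * exp (- (real t / real n))"

lemma n_pmf_binomial_0_ge:
  assumes "3 \<le> n" "real t / real n \<le> ln (real n) / 2"
  shows "exp (ln (real n) / 4) \<le> real n * pmf (binomial_pmf t (1 / real n)) 0"
proof -
  have "real t / (real n - 1) \<le> 3 / 2 * (real t / real n)"
    using assms(1) mult_right_mono[of 3 "real n" "real t"] by (simp add: field_simps)
  also have "\<dots> \<le> 3 / 4 * ln (real n)"
    using assms(2) by simp
  finally have "real n * exp (- (3 / 4 * ln (real n))) \<le> real n * exp (- (real t / (real n - 1)))"
    by (intro mult_left_mono) auto
  also have "\<dots> \<le> real n * (1 - 1 / real n) ^ t"
    using assms(1) by (intro mult_left_mono one_minus_inverse_power_ge_exp) auto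
  also have "real n * exp (- (3 / 4 * ln (real n))) = exp (ln (real n) / 4)"
  proof -
    have "ln (real n) / 4 = ln (real n) + - (3 / 4 * ln (real n))" by simp
    then show ?thesis
      using assms(1) by (simp only: exp_add) simp
  qed
  finally show ?thesis
    using assms(1) by simp
qed

lemma n_pmf_binomial_pred_ge:
  assumes "2 \<le> n" "1 \<le> g" "g \<le> t"
  shows "failure_exponent g n t * (((real t - real g) / (real n * ln (real n))) ^ (g - 1)
           * exp (- (real t / (real n * (real n - 1)))))
         \<le> real n * pmf (binomial_pmf t (1 / real n)) (g - 1)"
proof -
  define N where "N = real n"
  have N: "2 \<le> N" "0 < ln N"
    using assms(1) by (auto simp: N_def)
  have "(real t - real g) ^ (g - 1) \<le> (real t - real (g - 1)) ^ (g - 1)"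
    using assms by (intro power_mono) auto
  also have "\<dots> \<le> real (t choose (g - 1)) * fact (g - 1)"
    using assms by (intro power_diff_le_binomial_mult_fact) auto
  finally have binom: "(real t - real g) ^ (g - 1) / fact (g - 1) \<le> real (t choose (g - 1))"
    by (simp add: divide_le_eq)
  have "exp (- (real t / N)) * exp (- (real t / (N * (N - 1)))) = exp (- (real t / (N - 1)))"
    using N by (simp add: mult_exp_exp field_simps)
  also have "\<dots> \<le> (1 - 1 / N) ^ t"
    using N by (intro one_minus_inverse_power_ge_exp) auto
  also have "\<dots> \<le> (1 - 1 / N) ^ (t - (g - 1))"
    using N by (intro power_decreasing) auto
  finally have geom: "exp (- (real t / N)) * exp (- (real t / (N * (N - 1)))) \<le> (1 - 1 / N) ^ (t - (g - 1))" .
  have "failure_exponent g n t * (((real t - real g) / (N * ln N)) ^ (g - 1) * exp (- (real t / (N * (N - 1)))))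
      = N * ((real t - real g) ^ (g - 1) / fact (g - 1) * (1 / N) ^ (g - 1)
          * (exp (- (real t / N)) * exp (- (real t / (N * (N - 1))))))"
    using N by (simp add: failure_exponent_def N_def power_divide power_mult_distrib field_simps)
  also have "\<dots> \<le> N * (real (t choose (g - 1)) * (1 / N) ^ (g - 1) * (1 - 1 / N) ^ (t - (g - 1)))"
    using N assms binom geom by (intro mult_left_mono mult_mono) auto
  also have "\<dots> = N * pmf (binomial_pmf t (1 / N)) (g - 1)"
    using N by simp
  finally show ?thesis
    unfolding N_def .
qed

text \<open>Here \<open>n\<close> is fixed and large compared with \<open>g\<close> (the hypotheses hold eventually, see below),
  while the number \<open>t\<close> of packets is arbitrary.\<close>
context
  fixes g n :: nat and L l d :: real
  defines "L \<equiv> ln (real n)" and "l \<equiv> ln L" and "d \<equiv> l / L"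
  assumes g_pos: "1 \<le> g" and n_ge_3: "3 \<le> n" and g_le_n: "g \<le> n"
    and l_ge_1: "1 \<le> l" and l_le_exp: "l \<le> exp (L / 4)"
    and gd_le_half: "3 * real g * d \<le> 1 / 2"
    and n_large: "(L + real g * l) / (real n - 1) \<le> d"
    and l_large: "ln (fact (g - 1)) + ln (2 * 3 ^ (g - 1)) + ln l \<le> 2 * l"
begin

lemma L_pos: "0 < L"
  using n_ge_3 by (simp add: L_def)

lemma d_pos: "0 < d"
  using l_ge_1 L_pos by (simp add: d_def)

lemma d_le: "d \<le> 1 / 6"
proof -
  have "1 * d \<le> real g * d"
    using g_pos d_pos by (intro mult_right_mono) auto
  then show ?thesis
    using gd_le_half by linarith
qed

lemma L_ge_6: "6 \<le> L"
  using d_le l_ge_1 L_pos by (simp add: d_def field_simps)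

lemma exp_neg_le_d: "l \<le> y \<Longrightarrow> exp (- y) \<le> d"
proof -
  assume "l \<le> y"
  then have "exp (- y) \<le> exp (- l)" by simp
  also have "\<dots> = 1 / L"
    using L_pos by (simp add: l_def exp_minus inverse_eq_divide)
  also have "\<dots> \<le> d"
    using l_ge_1 L_pos by (simp add: d_def divide_right_mono)
  finally show ?thesis .
qed

lemma ln_failure_exponent:
  "ln (failure_exponent g n t) = L + real (g - 1) * l - real t / real n - ln (fact (g - 1))"
  using n_ge_3 by (simp add: failure_exponent_def L_def l_def ln_mult ln_div ln_realpow)

lemma t_div_n_le:
  assumes "d \<le> failure_exponent g n t"
  shows "real t / real n \<le> L + real g * l"
proof -
  have "ln d \<le> ln (failure_exponent g n t)"
    using assms d_pos by simp
  moreover have "ln d = ln l - l"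
    using l_ge_1 L_pos by (simp add: d_def l_def ln_div)
  moreover have "real (g - 1) * l + l = real g * l"
    using g_pos by (simp add: of_nat_diff algebra_simps)
  moreover have "0 \<le> ln l" "0 \<le> ln (fact (g - 1) :: real)"
    using l_ge_1 by simp_all
  ultimately show ?thesis
    using ln_failure_exponent[of t] by linarith
qed

lemma t_div_n_ge:
  assumes "failure_exponent g n t < 2 * 3 ^ (g - 1) * l"
  shows "L - 2 * l \<le> real t / real n"
proof -
  have "0 < failure_exponent g n t"
    using n_ge_3 by (simp add: failure_exponent_def)
  then have "ln (failure_exponent g n t) < ln (2 * 3 ^ (g - 1) * l)"
    using assms l_ge_1 by (subst ln_less_cancel_iff) auto
  also have "\<dots> = ln (2 * 3 ^ (g - 1)) + ln l"
    using l_ge_1 by (simp add: ln_mult)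
  finally have "ln (failure_exponent g n t) < ln (2 * 3 ^ (g - 1)) + ln l" .
  moreover have "0 \<le> real (g - 1) * l"
    using l_ge_1 by simp
  ultimately show ?thesis
    using l_large ln_failure_exponent[of t] by linarith
qed

lemma n_pmf_binomial_pred_ge_typical:
  assumes "L / 2 < real t / real n" "d \<le> failure_exponent g n t"
  shows "failure_exponent g n t * (((real t - real g) / (real n * L)) ^ (g - 1) * (1 - d))
    \<le> real n * pmf (binomial_pmf t (1 / real n)) (g - 1)"
proof -
  define base where "base = (real t - real g) / (real n * L)"
  have "L * real n < 2 * real t"
    using assms(1) n_ge_3 by (simp add: field_simps)
  moreover have "6 * real n \<le> L * real n"
    using L_ge_6 by (intro mult_right_mono) auto
  ultimately have "3 * real n \<le> real t"
    by linarith
  then have "g \<le> t"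
    using g_le_n by linarith
  then have base_nonneg: "0 \<le> base"
    using L_pos by (simp add: base_def)
  have "real t / (real n * (real n - 1)) = real t / real n / (real n - 1)"
    by simp
  also have "\<dots> \<le> (L + real g * l) / (real n - 1)"
    using t_div_n_le[OF assms(2)] n_ge_3 by (intro divide_right_mono) auto
  finally have "1 - d \<le> exp (- (real t / (real n * (real n - 1))))"
    using n_large exp_ge_add_one_self[of "- (real t / (real n * (real n - 1)))"] by linarith
  then have "failure_exponent g n t * (base ^ (g - 1) * (1 - d))
      \<le> failure_exponent g n t * (base ^ (g - 1) * exp (- (real t / (real n * (real n - 1)))))"
    using base_nonneg assms(2) d_pos by (intro mult_left_mono) auto
  also have "\<dots> \<le> real n * pmf (binomial_pmf t (1 / real n)) (g - 1)"
    using n_pmf_binomial_pred_ge[of n g t] n_ge_3 g_pos \<open>g \<le> t\<close> by (simp add: base_def L_def)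
  finally show ?thesis
    unfolding base_def .
qed

lemma exp_neg_n_pmf_binomial_pred_le:
  assumes "L / 2 < real t / real n" "d \<le> failure_exponent g n t"
  shows "exp (- (real n * pmf (binomial_pmf t (1 / real n)) (g - 1)))
    \<le> exp (- failure_exponent g n t) + 3 * real g * d"
proof -
  define x where "x = failure_exponent g n t"
  define y where "y = real n * pmf (binomial_pmf t (1 / real n)) (g - 1)"
  define base where "base = (real t - real g) / (real n * L)"
  have base_eq: "base = (real t / real n - real g / real n) / L"
    using n_ge_3 by (simp add: base_def field_simps)
  have y_ge: "x * (base ^ (g - 1) * (1 - d)) \<le> y"
    using n_pmf_binomial_pred_ge_typical[OF assms] by (simp add: x_def y_def base_def)
  have x_pos: "0 < x"
    using assms(2) d_pos by (simp add: x_def)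
  have g_div_n: "real g / real n \<le> 1"
    using g_le_n n_ge_3 by simp
  show ?thesis
  proof (cases "2 * 3 ^ (g - 1) * l \<le> x")
    case True
    have "1 / 3 \<le> base"
      using assms(1) g_div_n L_ge_6 by (simp add: base_eq field_simps)
    then have "2 * 3 ^ (g - 1) * l * ((1 / 3) ^ (g - 1) * (1 / 2)) \<le> x * (base ^ (g - 1) * (1 - d))"
      using True x_pos d_le l_ge_1 by (intro mult_mono power_mono) auto
    moreover have "2 * 3 ^ (g - 1) * l * ((1 / 3) ^ (g - 1) * (1 / 2)) = l"
      by (simp add: power_one_over)
    ultimately have "exp (- y) \<le> d"
      using y_ge by (intro exp_neg_le_d) linarith
    moreover have "d \<le> 3 * real g * d"
      using g_pos d_pos by simp
    ultimately show ?thesis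
      unfolding x_def y_def by (smt (verit) exp_gt_zero)
  next
    case False
    then have "L - 2 * l \<le> real t / real n"
      unfolding x_def by (intro t_div_n_ge) simp
    then have "(L - 3 * l) / L \<le> base"
      using g_div_n l_ge_1 L_pos unfolding base_eq by (intro divide_right_mono) auto
    moreover have "(L - 3 * l) / L = 1 - 3 * d"
      using L_pos by (simp add: d_def field_simps)
    ultimately have "1 - 3 * d \<le> base"
      by simp
    then have "1 + real (g - 1) * (- (3 * d)) \<le> base ^ (g - 1)"
      using Bernoulli_inequality[of "- (3 * d)" "g - 1"] power_mono[of "1 - 3 * d" base "g - 1"] d_le
      by simp
    then have "(1 - real (g - 1) * (3 * d)) * (1 - d) \<le> base ^ (g - 1) * (1 - d)"
      using d_le by (intro mult_right_mono) auto
    moreover have "1 - 3 * real g * d \<le> (1 - real (g - 1) * (3 * d)) * (1 - d)"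
    proof -
      have "0 \<le> real (g - 1) * (3 * d) * d"
        using d_pos by simp
      moreover have "real (g - 1) * (3 * d) + d \<le> 3 * real g * d"
        using g_pos d_pos by (simp add: of_nat_diff algebra_simps)
      ultimately show ?thesis
        by (simp add: algebra_simps)
    qed
    ultimately have "x * (1 - 3 * real g * d) \<le> y"
      using y_ge x_pos by (smt (verit) mult_left_mono)
    then show ?thesis
      using x_pos d_pos gd_le_half unfolding x_def y_def
      by (intro exp_neg_le_exp_neg_add) auto
  qed
qed

lemma exp_neg_n_pmf_binomial_le:
  "\<exists>k<g. exp (- (real n * pmf (binomial_pmf t (1 / real n)) k))
     \<le> exp (- failure_exponent g n t) + 3 * real g * d"
proof (cases "L / 2 < real t / real n \<and> d \<le> failure_exponent g n t")
  case True
  then show ?thesis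
    using exp_neg_n_pmf_binomial_pred_le g_pos by (intro exI[of _ "g - 1"]) auto
next
  case False
  have "d \<le> 3 * real g * d"
    using g_pos d_pos by simp
  moreover have "exp (- (real n * pmf (binomial_pmf t (1 / real n)) 0)) \<le> exp (- failure_exponent g n t) + d"
  proof (cases "real t / real n \<le> L / 2")
    case True
    then have "l \<le> real n * pmf (binomial_pmf t (1 / real n)) 0"
      using n_pmf_binomial_0_ge[of n t] n_ge_3 l_le_exp by (simp add: L_def)
    then show ?thesis
      using exp_neg_le_d by (smt (verit) exp_gt_zero)
  next
    case False
    with \<open>\<not> (L / 2 < real t / real n \<and> d \<le> failure_exponent g n t)\<close>
    have "failure_exponent g n t \<le> d"
      by simp
    moreover have "1 \<le> exp (- failure_exponent g n t) + failure_exponent g n t"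
      using exp_ge_add_one_self[of "- failure_exponent g n t"] by simp
    moreover have "exp (- (real n * pmf (binomial_pmf t (1 / real n)) 0)) \<le> 1"
      by simp
    ultimately show ?thesis
      by linarith
  qed
  ultimately show ?thesis
    using g_pos by (intro exI[of _ 0]) auto
qed

end

lemma eventually_exp_neg_n_pmf_binomial_less:
  assumes "1 \<le> g"
  shows "\<forall>\<^sub>F n in at_top. \<forall>t. \<exists>k<g. exp (- (real n * pmf (binomial_pmf t (1 / real n)) k))
     < exp (- failure_exponent g n t) + (3 * real g + 1) * (ln (ln (real n)) / ln (real n))"
proof -
  have "\<forall>\<^sub>F x in at_top. 1 \<le> ln (ln x) \<and> ln (ln x) \<le> exp (ln x / 4) \<and>
      3 * real g * (ln (ln x) / ln x) \<le> 1 / 2 \<and>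
      (ln x + real g * ln (ln x)) / (x - 1) \<le> ln (ln x) / ln x \<and>
      ln (fact (g - 1)) + ln (2 * 3 ^ (g - 1)) + ln (ln (ln x)) \<le> 2 * ln (ln (x :: real))"
    by (intro eventually_conj; real_asymp)
  then have "\<forall>\<^sub>F n in at_top. 1 \<le> ln (ln (real n)) \<and> ln (ln (real n)) \<le> exp (ln (real n) / 4) \<and>
      3 * real g * (ln (ln (real n)) / ln (real n)) \<le> 1 / 2 \<and>
      (ln (real n) + real g * ln (ln (real n))) / (real n - 1) \<le> ln (ln (real n)) / ln (real n) \<and>
      ln (fact (g - 1)) + ln (2 * 3 ^ (g - 1)) + ln (ln (ln (real n))) \<le> 2 * ln (ln (real n))"
    by (rule eventually_compose_filterlim[OF _ filterlim_real_sequentially])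
  with eventually_ge_at_top[of 3] eventually_ge_at_top[of g]
  show ?thesis
  proof eventually_elim
    case (elim n)
    have "0 < ln (ln (real n))" "0 < ln (real n)"
      using elim by (linarith, simp)
    then have "0 < ln (ln (real n)) / ln (real n)"
      by (rule divide_pos_pos)
    show ?case
    proof
      fix t
      have slack: "a < b + (3 * real g + 1) * D" if "a \<le> b + 3 * real g * D" "0 < D" for a b D :: real
        using that by (simp add: distrib_right)
      obtain k where "k < g" and "exp (- (real n * pmf (binomial_pmf t (1 / real n)) k))
          \<le> exp (- failure_exponent g n t) + 3 * real g * (ln (ln (real n)) / ln (real n))"
        using exp_neg_n_pmf_binomial_le[of g n t] elim assms by auto
      with \<open>0 < ln (ln (real n)) / ln (real n)\<close> slack
      show "\<exists>k<g. exp (- (real n * pmf (binomial_pmf t (1 / real n)) k))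
          < exp (- failure_exponent g n t) + (3 * real g + 1) * (ln (ln (real n)) / ln (real n))"
        by blast
    qed
  qed
qed

lemma eventually_prob_decoding_fails_gt:
  assumes "1 \<le> g"
  shows "\<forall>\<^sub>F n in at_top. \<forall>t.
    1 - exp (- failure_exponent g n t) - (3 * real g + 1) * (ln (ln (real n)) / ln (real n))
    < measure_pmf.prob (packets_pmf n g t :: (nat \<times> (nat \<Rightarrow> 'a::{field,finite})) list pmf)
        {xs. decoding_fails n g xs}"
  using eventually_exp_neg_n_pmf_binomial_less[OF assms] eventually_ge_at_top[of 1]
proof eventually_elim
  case (elim n)
  show ?case
  proof
    fix t
    obtain k where "k < g" and "exp (- (real n * pmf (binomial_pmf t (1 / real n)) k))
        < exp (- failure_exponent g n t) + (3 * real g + 1) * (ln (ln (real n)) / ln (real n))"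
      using elim by blast
    moreover have "1 - exp (- (real n * pmf (binomial_pmf t (1 / real n)) k))
        \<le> measure_pmf.prob (packets_pmf n g t :: (nat \<times> (nat \<Rightarrow> 'a)) list pmf) {xs. decoding_fails n g xs}"
      using elim \<open>k < g\<close> by (intro prob_decoding_fails_ge_exp) auto
    ultimately show "1 - exp (- failure_exponent g n t) - (3 * real g + 1) * (ln (ln (real n)) / ln (real n))
        < measure_pmf.prob (packets_pmf n g t :: (nat \<times> (nat \<Rightarrow> 'a)) list pmf) {xs. decoding_fails n g xs}"
      by linarith
  qed
qed

theorem theorem6:
  fixes g :: nat
  assumes "g \<ge> 1"
  shows "\<exists>e :: nat \<Rightarrow> real. e \<in> O(\<lambda>n. ln (ln (real n)) / ln (real n)) \<and>
    (\<forall>\<^sub>F n in at_top. \<forall>t :: nat.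
       measure_pmf.prob (packets_pmf n g t :: (nat \<times> (nat \<Rightarrow> 'a::{field,finite})) list pmf)
                        {xs. decoding_fails n g xs}
       > 1 - exp (- (1 / fact (g - 1)) * real n * ln (real n) ^ (g - 1) * exp (- (real t / real n))) + e n)"
proof -
  have exponent: "- (1 / fact (g - 1)) * real n * ln (real n) ^ (g - 1) * exp (- (real t / real n))
      = - failure_exponent g n t" for n t :: nat
    by (simp add: failure_exponent_def)
  have "(\<lambda>n. - ((3 * real g + 1) * (ln (ln (real n)) / ln (real n)))) \<in> O(\<lambda>n. ln (ln (real n)) / ln (real n))"
    by (subst landau_o.big.uminus_in_iff, subst landau_o.big.cmult_in_iff) auto
  then show ?thesis
    unfolding exponent
    using eventually_prob_decoding_fails_gt[OF assms, where 'a='a]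
    by (intro exI[of _ "\<lambda>n. - ((3 * real g + 1) * (ln (ln (real n)) / ln (real n)))"] conjI) simp_all
qed

end
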